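(* Let $(p,f)$ be an SCF-RT rationalizable within the class of symmetric RUM-CFs, and let $x,y\in X$. If $(x,y)\in T(R^s\cup R^{srt})$, then every symmetric RUM-CF $(u,g,r)$ rationalizing $(p,f)$ satisfies $u(x)\geq u(y)$. If $(x,y)\in T_P(R^s\cup R^{srt})$, then every such model satisfies $u(x)>u(y)$.
   Context: $X$ is a finite set of options; $C=\{(x,y): x,y\in X,\ x\neq y\}$; $D\subseteq C$ is a fixed non-empty set with $(x,y)\in D\Rightarrow (y,x)\in D$. An SCF $p$ assigns to each $(x,y)\in D$ a number $p(x,y)>0$ with $p(x,y)+p(y,x)=1$. An SCF-RT is a pair $(p,f)$ where $p$ is an SCF and $f$ assigns to each $(x,y)\in D$ a strictly positive density $f(x,y)$ on $\mathbb{R}^+$ with cdf $F(x,y)$. A RUM is a pair $(u,g)$ with $u:X\to\mathbb{R}$ and $g$ assigning to each $(x,y)\in C$ a density $g(x,y)$ on $\mathbb{R}$ (cdf $G(x,y)$) with $\int v\,g(x,y)(v)\,dv=u(x)-u(y)=:v(x,y)$, $g(x,y)(v)=g(y,x)(-v)$ for all $v$, and connected support. A RUM-CF is $(u,g,r)$ with $(u,g)$ a RUM and $r:\mathbb{R}^{++}\to\mathbb{R}^+$ continuous, strictly decreasing where $r(v)>0$, $\lim_{v\to0}r(v)=\infty$, $\lim_{v\to\infty}r(v)=0$; $r^{-1}(t)$ ($t>0$) is the inverse of $r$ restricted to $\{r>0\}$. It rationalizes $(p,f)$ if for all $(x,y)\in D$: $G(x,y)(0)=p(y,x)$ and $\frac{1-G(x,y)(r^{-1}(t))}{1-G(x,y)(0)}=F(x,y)(t)$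 for all $t>0$. It is symmetric if $g(x,y)(v(x,y)+\delta)=g(x,y)(v(x,y)-\delta)$ for all $(x,y)\in C$, $\delta\geq0$. For $(a,b)\in D$ with $p(a,b)>p(b,a)$, $t(a,b)>0$ is defined by $F(a,b)(t(a,b))=p(b,a)/p(a,b)$ (undefined otherwise). Relations on $X$: $(x,y)\in R^s$ iff $x=y$, or $(x,y)\in D$ and $p(x,y)\geq p(y,x)$; $(x,y)\in R^{srt}$ iff $(x,y)\in C\setminus D$ and there is $z\in X$ with $t(x,z)\leq t(y,z)$ or $t(z,x)\geq t(z,y)$ (the compared quantities being defined). For a binary relation $R$, $T(R)$ is its transitive closure and $T_P(R)$ the asymmetric part of $T(R)$ ($(x,y)\in T(R)$, $(y,x)\notin T(R)$). *)

theory Defs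
  imports "HOL-Analysis.Analysis"
begin

(* Options form a finite type 'a (X = UNIV). Pairs of distinct options: *)
definition Cpairs :: "('a \<times> 'a) set" where
  "Cpairs = {(x, y). x \<noteq> y}"

definition domain_ok :: "('a \<times> 'a) set \<Rightarrow> bool" where
  "domain_ok D \<longleftrightarrow> D \<noteq> {} \<and> D \<subseteq> Cpairs \<and> (\<forall>x y. (x, y) \<in> D \<longrightarrow> (y, x) \<in> D)"

definition is_SCF :: "('a \<times> 'a) set \<Rightarrow> ('a \<Rightarrow> 'a \<Rightarrow> real) \<Rightarrow> bool" where
  "is_SCF D p \<longleftrightarrow> (\<forall>(x, y) \<in> D. p x y > 0 \<and> p x y + p y x = 1)"

definition pos_density_Rplus :: "(real \<Rightarrow> real) \<Rightarrow> bool" where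
  "pos_density_Rplus h \<longleftrightarrow> h \<in> borel_measurable lborel \<and> (\<forall>t \<ge> 0. h t > 0)
     \<and> set_integrable lborel {0..} h \<and> (LBINT t:{0..}. h t) = 1"

definition cdf_Rplus :: "(real \<Rightarrow> real) \<Rightarrow> real \<Rightarrow> real" where
  "cdf_Rplus h t = (LBINT s:{0..t}. h s)"

definition is_SCF_RT :: "('a \<times> 'a) set \<Rightarrow> ('a \<Rightarrow> 'a \<Rightarrow> real) \<Rightarrow> ('a \<Rightarrow> 'a \<Rightarrow> real \<Rightarrow> real) \<Rightarrow> bool" where
  "is_SCF_RT D p f \<longleftrightarrow> is_SCF D p \<and> (\<forall>(x, y) \<in> D. pos_density_Rplus (f x y))"

definition density_R :: "(real \<Rightarrow> real) \<Rightarrow> bool" where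
  "density_R h \<longleftrightarrow> h \<in> borel_measurable lborel \<and> (\<forall>v. h v \<ge> 0)
     \<and> integrable lborel h \<and> integral\<^sup>L lborel h = 1"

definition cdf_R :: "(real \<Rightarrow> real) \<Rightarrow> real \<Rightarrow> real" where
  "cdf_R h v = (LBINT w:{..v}. h w)"

definition dens_support :: "(real \<Rightarrow> real) \<Rightarrow> real set" where
  "dens_support h = {v. h v > 0}"

definition is_RUM :: "('a \<Rightarrow> real) \<Rightarrow> ('a \<Rightarrow> 'a \<Rightarrow> real \<Rightarrow> real) \<Rightarrow> bool" where
  "is_RUM u g \<longleftrightarrow> (\<forall>(x, y) \<in> Cpairs.
      density_R (g x y)
      \<and> integrable lborel (\<lambda>v. v * g x y v)
      \<and> (LINT v|lborel. v * g x y v) = u x - u y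
      \<and> (\<forall>v. g x y v = g y x (- v))
      \<and> connected (dens_support (g x y)))"

definition is_CF :: "(real \<Rightarrow> real) \<Rightarrow> bool" where
  "is_CF r \<longleftrightarrow> continuous_on {0<..} r
     \<and> (\<forall>v > 0. r v \<ge> 0)
     \<and> (\<forall>v w. 0 < v \<and> v < w \<and> r v > 0 \<and> r w > 0 \<longrightarrow> r w < r v)
     \<and> filterlim r at_top (at_right 0)
     \<and> (r \<longlongrightarrow> 0) at_top"

definition rinv :: "(real \<Rightarrow> real) \<Rightarrow> real \<Rightarrow> real" where
  "rinv r t = (THE v. 0 < v \<and> r v > 0 \<and> r v = t)"

definition is_RUM_CF :: "('a \<Rightarrow> real) \<Rightarrow> ('a \<Rightarrow> 'a \<Rightarrow> real \<Rightarrow> real) \<Rightarrow> (real \<Rightarrow> real) \<Rightarrow> bool" where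
  "is_RUM_CF u g r \<longleftrightarrow> is_RUM u g \<and> is_CF r"

definition rationalizes ::
  "('a \<times> 'a) set \<Rightarrow> ('a \<Rightarrow> 'a \<Rightarrow> real) \<Rightarrow> ('a \<Rightarrow> 'a \<Rightarrow> real \<Rightarrow> real)
   \<Rightarrow> ('a \<Rightarrow> real) \<Rightarrow> ('a \<Rightarrow> 'a \<Rightarrow> real \<Rightarrow> real) \<Rightarrow> (real \<Rightarrow> real) \<Rightarrow> bool" where
  "rationalizes D p f u g r \<longleftrightarrow> is_RUM_CF u g r \<and>
     (\<forall>(x, y) \<in> D. cdf_R (g x y) 0 = p y x
        \<and> (\<forall>t > 0. (1 - cdf_R (g x y) (rinv r t)) / (1 - cdf_R (g x y) 0) = cdf_Rplus (f x y) t))"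

definition is_symmetric :: "('a \<Rightarrow> real) \<Rightarrow> ('a \<Rightarrow> 'a \<Rightarrow> real \<Rightarrow> real) \<Rightarrow> bool" where
  "is_symmetric u g \<longleftrightarrow> (\<forall>(x, y) \<in> Cpairs. \<forall>\<delta> \<ge> 0.
      g x y (u x - u y + \<delta>) = g x y (u x - u y - \<delta>))"

definition sym_rationalizes ::
  "('a \<times> 'a) set \<Rightarrow> ('a \<Rightarrow> 'a \<Rightarrow> real) \<Rightarrow> ('a \<Rightarrow> 'a \<Rightarrow> real \<Rightarrow> real)
   \<Rightarrow> ('a \<Rightarrow> real) \<Rightarrow> ('a \<Rightarrow> 'a \<Rightarrow> real \<Rightarrow> real) \<Rightarrow> (real \<Rightarrow> real) \<Rightarrow> bool" where
  "sym_rationalizes D p f u g r \<longleftrightarrow> rationalizes D p f u g r \<and> is_symmetric u g"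

definition tval ::
  "('a \<times> 'a) set \<Rightarrow> ('a \<Rightarrow> 'a \<Rightarrow> real) \<Rightarrow> ('a \<Rightarrow> 'a \<Rightarrow> real \<Rightarrow> real) \<Rightarrow> 'a \<Rightarrow> 'a \<Rightarrow> real option" where
  "tval D p f a b = (if (a, b) \<in> D \<and> p a b > p b a
      then Some (THE t. t > 0 \<and> cdf_Rplus (f a b) t = p b a / p a b) else None)"

definition Rs :: "('a \<times> 'a) set \<Rightarrow> ('a \<Rightarrow> 'a \<Rightarrow> real) \<Rightarrow> ('a \<times> 'a) set" where
  "Rs D p = {(x, y). x = y \<or> ((x, y) \<in> D \<and> p x y \<ge> p y x)}"

definition Rsrt ::
  "('a \<times> 'a) set \<Rightarrow> ('a \<Rightarrow> 'a \<Rightarrow> real) \<Rightarrow> ('a \<Rightarrow> 'a \<Rightarrow> real \<Rightarrow> real) \<Rightarrow> ('a \<times> 'a) set" where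
  "Rsrt D p f = {(x, y). (x, y) \<in> Cpairs - D \<and> (\<exists>z.
      (\<exists>s1 s2. tval D p f x z = Some s1 \<and> tval D p f y z = Some s2 \<and> s1 \<le> s2)
    \<or> (\<exists>s1 s2. tval D p f z x = Some s1 \<and> tval D p f z y = Some s2 \<and> s1 \<ge> s2))}"

definition TC :: "('a \<times> 'a) set \<Rightarrow> ('a \<times> 'a) set" where
  "TC R = R\<^sup>+"

definition TP :: "('a \<times> 'a) set \<Rightarrow> ('a \<times> 'a) set" where
  "TP R = {(x, y). (x, y) \<in> TC R \<and> (y, x) \<notin> TC R}"

end

theory Submission
  imports Defs
begin

(* In a symmetric RUM the density of the utility difference of a pair (a, b) is symmetric about
   m = u a - u b, so its cdf G satisfies G (2 m) = 1 - G 0 = p a b; as the support is an interval,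
   G is strictly increasing across m. Hence p a b \<ge> p b a forces u a \<ge> u b, with equality of
   utilities only if p a b = p b a. When p a b > p b a the choice function r must be positive at 2 m,
   and the response-time distribution gives t(a, b) = r (2 m), which is strictly decreasing in the
   utility difference; so comparing t(x, z) with t(y, z), or t(z, x) with t(z, y), compares u x with
   u y. Every step of Rs \<union> Rsrt therefore weakly decreases u and can be reversed when u stays constant;
   both properties pass to the transitive closure, so a pair in its asymmetric part strictly
   decreases u. *)

lemma density_R_integrable_indicator:
  assumes "density_R h" "A \<in> sets lborel"
  shows "integrable lborel (\<lambda>s. indicator A s * h s)"
  using integrable_mult_indicator[OF assms(2), of h] assms(1) unfolding density_R_def by simp

lemma cdf_R_eq_integral: "cdf_R h v = (\<integral>s. indicator {..v} s * h s \<partial>lborel)"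
  unfolding cdf_R_def set_lebesgue_integral_def by simp

lemma cdf_R_diff:
  assumes h: "density_R h" and "a \<le> b"
  shows "cdf_R h b - cdf_R h a = (\<integral>s. indicator {a<..b} s * h s \<partial>lborel)"
proof -
  have "cdf_R h b - cdf_R h a = (\<integral>s. indicator {..b} s * h s - indicator {..a} s * h s \<partial>lborel)"
    unfolding cdf_R_eq_integral
    by (intro Bochner_Integration.integral_diff[symmetric] density_R_integrable_indicator[OF h]) auto
  also have "\<dots> = (\<integral>s. indicator {a<..b} s * h s \<partial>lborel)"
    using \<open>a \<le> b\<close> by (intro Bochner_Integration.integral_cong) (auto split: split_indicator)
  finally show ?thesis .
qed

lemma cdf_R_mono:
  assumes h: "density_R h" and "a \<le> b"
  shows "cdf_R h a \<le> cdf_R h b"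
proof -
  have "0 \<le> (\<integral>s. indicator {a<..b} s * h s \<partial>lborel)"
    using h unfolding density_R_def by (intro Bochner_Integration.integral_nonneg) (auto split: split_indicator)
  then show ?thesis using cdf_R_diff[OF assms] by simp
qed

lemma cdf_R_symmetric:
  assumes h: "density_R h" and sym: "\<And>s. h (2 * m - s) = h s"
  shows "cdf_R h v + cdf_R h (2 * m - v) = 1"
proof -
  have [measurable]: "h \<in> borel_measurable borel" using h unfolding density_R_def by simp
  have "cdf_R h (2 * m - v) = (\<integral>s. indicator {..2 * m - v} (2 * m + (-1) * s) * h (2 * m + (-1) * s) \<partial>lborel)"
    unfolding cdf_R_eq_integral
    using lborel_integral_real_affine[of "-1" "\<lambda>s. indicator {..2 * m - v} s * h s" "2 * m"] by simp
  also have "\<dots> = (\<integral>s. indicator {v..} s * h s \<partial>lborel)"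
    using sym by (intro Bochner_Integration.integral_cong) (auto split: split_indicator)
  also have "\<dots> = (\<integral>s. indicator {v<..} s * h s \<partial>lborel)"
    by (rule integral_cong_AE) (auto intro: AE_mp[OF AE_lborel_singleton[of v]] split: split_indicator)
  finally have "cdf_R h v + cdf_R h (2 * m - v)
      = (\<integral>s. indicator {..v} s * h s + indicator {v<..} s * h s \<partial>lborel)"
    unfolding cdf_R_eq_integral
    by (simp add: density_R_integrable_indicator[OF h])
  also have "\<dots> = integral\<^sup>L lborel h"
    by (intro Bochner_Integration.integral_cong) (auto split: split_indicator)
  finally show ?thesis using h unfolding density_R_def by simp
qed

lemma cdf_R_flat_imp_AE_zero:
  assumes h: "density_R h" and "a \<le> b" and "cdf_R h a = cdf_R h b"
  shows "AE s in lborel. s \<in> {a<..b} \<longrightarrow> h s = 0"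
proof -
  have "(\<integral>s. indicator {a<..b} s * h s \<partial>lborel) = 0"
    using cdf_R_diff[OF h \<open>a \<le> b\<close>] \<open>cdf_R h a = cdf_R h b\<close> by simp
  then have "AE s in lborel. indicator {a<..b} s * h s = 0"
    using h unfolding density_R_def
    by (subst integral_nonneg_eq_0_iff_AE[symmetric]) (auto intro: density_R_integrable_indicator[OF h])
  then show ?thesis by (auto elim: AE_mp split: split_indicator)
qed

lemma AE_lborel_not_in_Ioo_imp_le:
  fixes a b :: real
  assumes "AE s in lborel. s \<notin> {a<..<b}"
  shows "b \<le> a"
proof -
  have "(AE s in lborel. s \<notin> {a<..<b}) \<longleftrightarrow> emeasure lborel {a<..<b} = 0"
    by (rule AE_iff_measurable) (auto intro: borel_open)
  with assms have "emeasure lborel {a<..<b} = 0" by blast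
  then show ?thesis by (cases "a < b") auto
qed

lemma cdf_R_strict_around_centre:
  assumes h: "density_R h" and sym: "\<And>s. h (2 * m - s) = h s"
    and conn: "connected (dens_support h)" and "0 < \<delta>"
  shows "cdf_R h (m - \<delta>) < cdf_R h (m + \<delta>)"
proof (rule ccontr)
  assume "\<not> ?thesis"
  then have "cdf_R h (m - \<delta>) = cdf_R h (m + \<delta>)"
    using cdf_R_mono[OF h, of "m - \<delta>" "m + \<delta>"] \<open>0 < \<delta>\<close> by linarith
  then have AE_zero: "AE s in lborel. s \<in> {m - \<delta><..m + \<delta>} \<longrightarrow> h s = 0"
    using cdf_R_flat_imp_AE_zero[OF h] \<open>0 < \<delta>\<close> by simp
  have nonneg: "\<And>s. 0 \<le> h s" and "integral\<^sup>L lborel h = 1"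
    using h unfolding density_R_def by auto
  have "\<exists>s. 0 < h s \<and> s \<notin> {m - \<delta><..m + \<delta>}"
  proof (rule ccontr)
    assume no_pos: "\<nexists>s. 0 < h s \<and> s \<notin> {m - \<delta><..m + \<delta>}"
    have "AE s in lborel. h s = 0"
      using AE_zero
    proof eventually_elim
      case (elim s)
      then show ?case using no_pos nonneg[of s] by force
    qed
    then have "integral\<^sup>L lborel h = 0" by (rule integral_eq_zero_AE)
    with \<open>integral\<^sup>L lborel h = 1\<close> show False by simp
  qed
  then obtain s where s: "0 < h s" "s \<notin> {m - \<delta><..m + \<delta>}" by blast
  \<comment> \<open>The support is an interval containing s and its mirror image 2 m - s,
    which lie on opposite sides of the centre at distance at least \<delta>.\<close>
  have centre_in_support: "{m - \<delta><..<m + \<delta>} \<subseteq> dens_support h"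
  proof
    fix v assume "v \<in> {m - \<delta><..<m + \<delta>}"
    moreover have "s \<in> dens_support h" "2 * m - s \<in> dens_support h"
      using s(1) sym[of s] unfolding dens_support_def by auto
    ultimately show "v \<in> dens_support h"
      using conn s(2) unfolding is_interval_connected_1[symmetric] is_interval_1
      by (smt (verit) greaterThanAtMost_iff greaterThanLessThan_iff)
  qed
  have "AE s in lborel. s \<notin> {m - \<delta><..<m + \<delta>}"
    using AE_zero
  proof eventually_elim
    case (elim s)
    then show ?case using centre_in_support by (auto simp: dens_support_def)
  qed
  then show False using AE_lborel_not_in_Ioo_imp_le \<open>0 < \<delta>\<close> by fastforce
qed

lemma pos_density_Rplus_integrable_indicator:
  assumes h: "pos_density_Rplus h" and "A \<subseteq> {0..}" "A \<in> sets lborel"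
  shows "integrable lborel (\<lambda>s. indicator A s * h s)"
proof -
  have "set_integrable lborel A h"
    using set_integrable_subset[of lborel "{0..}" h A] h assms(2,3) unfolding pos_density_Rplus_def by auto
  then show ?thesis unfolding set_integrable_def by simp
qed

lemma cdf_Rplus_diff:
  assumes h: "pos_density_Rplus h" and "0 \<le> a" "a \<le> b"
  shows "cdf_Rplus h b - cdf_Rplus h a = (\<integral>s. indicator {a<..b} s * h s \<partial>lborel)"
proof -
  have "cdf_Rplus h b - cdf_Rplus h a
      = (\<integral>s. indicator {0..b} s * h s - indicator {0..a} s * h s \<partial>lborel)"
    unfolding cdf_Rplus_def set_lebesgue_integral_def
    by (simp add: pos_density_Rplus_integrable_indicator[OF h])
  also have "\<dots> = (\<integral>s. indicator {a<..b} s * h s \<partial>lborel)"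
    using assms(2,3) by (intro Bochner_Integration.integral_cong) (auto split: split_indicator)
  finally show ?thesis .
qed

lemma cdf_Rplus_strict_mono:
  assumes h: "pos_density_Rplus h"
  shows "strict_mono_on {0..} (cdf_Rplus h)"
proof (rule strict_mono_onI)
  fix a b :: real assume "a \<in> {0..}" "b \<in> {0..}" "a < b"
  then have pos: "\<And>s. a < s \<Longrightarrow> 0 < h s" using h unfolding pos_density_Rplus_def by auto
  show "cdf_Rplus h a < cdf_Rplus h b"
  proof (rule ccontr)
    assume "\<not> ?thesis"
    moreover have "0 \<le> (\<integral>s. indicator {a<..b} s * h s \<partial>lborel)"
      using pos by (intro Bochner_Integration.integral_nonneg) (auto simp: less_imp_le split: split_indicator)
    ultimately have "(\<integral>s. indicator {a<..b} s * h s \<partial>lborel) = 0"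
      using cdf_Rplus_diff[OF h, of a b] \<open>a \<in> {0..}\<close> \<open>a < b\<close> by simp
    then have "AE s in lborel. indicator {a<..b} s * h s = 0"
      using pos \<open>a \<in> {0..}\<close>
      by (subst integral_nonneg_eq_0_iff_AE[symmetric])
        (auto intro!: pos_density_Rplus_integrable_indicator[OF h] simp: less_imp_le split: split_indicator)
    then have "AE s in lborel. s \<notin> {a<..<b}"
    proof eventually_elim
      case (elim s)
      then show ?case using pos[of s] by (auto split: split_indicator_asm)
    qed
    then show False using AE_lborel_not_in_Ioo_imp_le \<open>a < b\<close> by fastforce
  qed
qed

lemma cdf_Rplus_THE_eq:
  assumes "pos_density_Rplus h" "0 < t"
  shows "(THE s. 0 < s \<and> cdf_Rplus h s = cdf_Rplus h t) = t"
  using strict_mono_on_eqD[OF cdf_Rplus_strict_mono[OF assms(1)]] assms(2)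
  by (intro the_equality) auto

lemma cdf_Rplus_arbitrarily_small:
  assumes h: "pos_density_Rplus h" and "0 < c"
  shows "\<exists>t>0. cdf_Rplus h t < c"
proof -
  have h01: "set_integrable lborel {0..t} h" if "t \<ge> 0" for t
    using set_integrable_subset[of lborel "{0..}" h "{0..t}"] h unfolding pos_density_Rplus_def by auto
  then have "h integrable_on {0..1}" by (simp add: set_borel_integral_eq_integral)
  then have "continuous_on {0..1} (\<lambda>t. integral {0..t} h)" by (rule indefinite_integral_continuous_1)
  then obtain e where e: "0 < e"
    "\<And>t. t \<in> {0..1} \<Longrightarrow> dist t 0 < e \<Longrightarrow> dist (integral {0..t} h) (integral {0..0} h) < c"
    unfolding continuous_on_iff using \<open>0 < c\<close> by (metis atLeastAtMost_iff order_refl zero_le_one)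
  define t where "t = min (e / 2) 1"
  have t: "0 < t" "t \<in> {0..1}" "dist t 0 < e" using e(1) unfolding t_def by auto
  have "cdf_Rplus h t = integral {0..t} h"
    unfolding cdf_Rplus_def using h01 t(1) by (simp add: set_borel_integral_eq_integral)
  then show ?thesis using e(2)[OF t(2,3)] t(1) by (intro exI[of _ t]) auto
qed

lemma CF_strict_antimono:
  "is_CF r \<Longrightarrow> 0 < v \<Longrightarrow> v < w \<Longrightarrow> 0 < r v \<Longrightarrow> 0 < r w \<Longrightarrow> r w < r v"
  unfolding is_CF_def by blast

lemma CF_le_iff:
  assumes "is_CF r" "0 < v" "0 < w" "0 < r v" "0 < r w"
  shows "r v \<le> r w \<longleftrightarrow> w \<le> v"
proof (cases v w rule: linorder_cases)
  case less
  then show ?thesis using CF_strict_antimono[OF assms(1,2) less assms(4,5)] by simp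
next
  case greater
  then show ?thesis using CF_strict_antimono[OF assms(1,3) greater assms(5,4)] by simp
qed simp

lemma CF_pos_left:
  assumes r: "is_CF r" and "0 < v" "v \<le> w" "0 < r w"
  shows "0 < r v"
proof (rule ccontr)
  assume "\<not> 0 < r v"
  then have "r v = 0" using r \<open>0 < v\<close> unfolding is_CF_def by force
  moreover have "continuous_on {v..w} r"
    using r \<open>0 < v\<close> unfolding is_CF_def by (auto elim: continuous_on_subset)
  ultimately obtain c where c: "v \<le> c" "c \<le> w" "r c = r w / 2"
    using IVT'[of r v "r w / 2" w] \<open>v \<le> w\<close> \<open>0 < r w\<close> by auto
  then have "c < w" using \<open>0 < r w\<close> by (cases "c = w") auto
  then have "r w < r c" using CF_strict_antimono[OF r] c \<open>0 < v\<close> \<open>0 < r w\<close> by simp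
  with c(3) \<open>0 < r w\<close> show False by simp
qed

lemma CF_surj:
  assumes r: "is_CF r" and "0 < t"
  shows "\<exists>w>0. r w = t"
proof -
  have "\<forall>\<^sub>F v in at_right 0. t < r v"
    using r unfolding is_CF_def filterlim_at_top_dense by blast
  with eventually_at_right_less have "\<forall>\<^sub>F v in at_right 0. 0 < v \<and> t < r v"
    by (rule eventually_conj)
  then obtain a where a: "0 < a" "t < r a" by (auto dest: eventually_happens)
  have "\<forall>\<^sub>F v in at_top. r v < t"
    using r \<open>0 < t\<close> unfolding is_CF_def by (blast intro: order_tendstoD(2))
  with eventually_gt_at_top have "\<forall>\<^sub>F v in at_top. a < v \<and> r v < t"
    by (rule eventually_conj)
  then obtain b where b: "a < b" "r b < t" by (auto dest: eventually_happens)
  have "continuous_on {a..b} r"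
    using r \<open>0 < a\<close> unfolding is_CF_def by (auto elim: continuous_on_subset)
  then obtain w where "a \<le> w" "r w = t"
    using IVT2'[of r b t a] a b by auto
  with \<open>0 < a\<close> show ?thesis by (intro exI[of _ w]) auto
qed

lemma CF_inj:
  assumes r: "is_CF r" and "0 < v" "0 < w" "0 < r v" "r v = r w"
  shows "v = w"
  using CF_le_iff[OF r, of v w] CF_le_iff[OF r, of w v] assms(2-5) by simp

lemma rinv_CF_apply:
  assumes r: "is_CF r" and "0 < w" "0 < r w"
  shows "rinv r (r w) = w"
  unfolding rinv_def using assms CF_inj[OF r] by (intro the_equality) auto

lemma rinv_CF:
  assumes r: "is_CF r" and "0 < t"
  shows "0 < rinv r t" "r (rinv r t) = t"
proof -
  obtain w where "0 < w" "r w = t" using CF_surj[OF assms] by auto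
  then show "0 < rinv r t" "r (rinv r t) = t"
    using rinv_CF_apply[OF r, of w] \<open>0 < t\<close> by auto
qed

locale sym_rationalization =
  fixes D :: "('a \<times> 'a) set" and p :: "'a \<Rightarrow> 'a \<Rightarrow> real" and f :: "'a \<Rightarrow> 'a \<Rightarrow> real \<Rightarrow> real"
    and u :: "'a \<Rightarrow> real" and g :: "'a \<Rightarrow> 'a \<Rightarrow> real \<Rightarrow> real" and r :: "real \<Rightarrow> real"
  assumes domain: "domain_ok D"
    and SCF_RT: "is_SCF_RT D p f"
    and model: "sym_rationalizes D p f u g r"
begin

lemma CF: "is_CF r"
  using model unfolding sym_rationalizes_def rationalizes_def is_RUM_CF_def by simp

lemma D_sym: "(a, b) \<in> D \<Longrightarrow> (b, a) \<in> D"
  using domain unfolding domain_ok_def by blast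

lemma D_Cpairs: "(a, b) \<in> D \<Longrightarrow> (a, b) \<in> Cpairs"
  using domain unfolding domain_ok_def by blast

lemma choice_prob:
  assumes "(a, b) \<in> D"
  shows "0 < p a b" "p a b + p b a = 1" "1 - p b a = p a b"
  using SCF_RT assms unfolding is_SCF_RT_def is_SCF_def by auto

lemma pos_density: "(a, b) \<in> D \<Longrightarrow> pos_density_Rplus (f a b)"
  using SCF_RT unfolding is_SCF_RT_def by auto

lemma density:
  assumes "(a, b) \<in> Cpairs"
  shows "density_R (g a b)" "connected (dens_support (g a b))"
  using model assms unfolding sym_rationalizes_def rationalizes_def is_RUM_CF_def is_RUM_def by auto

lemma density_symmetric:
  assumes "(a, b) \<in> Cpairs"
  shows "g a b (2 * (u a - u b) - s) = g a b s"
proof -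
  have "g a b (u a - u b + \<delta>) = g a b (u a - u b - \<delta>)" if "0 \<le> \<delta>" for \<delta>
    using model assms that unfolding sym_rationalizes_def is_symmetric_def by auto
  from this[of "s - (u a - u b)"] this[of "(u a - u b) - s"] show ?thesis
    by (cases "u a - u b \<le> s") (simp_all add: algebra_simps)
qed

lemma cdf_0: "(a, b) \<in> D \<Longrightarrow> cdf_R (g a b) 0 = p b a"
  using model unfolding sym_rationalizes_def rationalizes_def by auto

lemma cdf_rinv:
  "(a, b) \<in> D \<Longrightarrow> 0 < t \<Longrightarrow>
    (1 - cdf_R (g a b) (rinv r t)) / (1 - cdf_R (g a b) 0) = cdf_Rplus (f a b) t"
  using model unfolding sym_rationalizes_def rationalizes_def by auto

lemma cdf_twice_utility_diff:
  assumes "(a, b) \<in> D"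
  shows "cdf_R (g a b) (2 * (u a - u b)) = p a b"
proof -
  have "(a, b) \<in> Cpairs" using D_Cpairs[OF assms] .
  from cdf_R_symmetric[OF density(1)[OF this] density_symmetric[OF this], of 0]
  show ?thesis using cdf_0[OF assms] choice_prob(2)[OF assms] by simp
qed

lemma utility_le_if_choice_le:
  assumes ab: "(a, b) \<in> D" and "p b a \<le> p a b"
  shows "u b \<le> u a"
proof (rule ccontr)
  assume "\<not> u b \<le> u a"
  moreover have "(a, b) \<in> Cpairs" using D_Cpairs[OF ab] .
  ultimately have "cdf_R (g a b) (2 * (u a - u b)) < cdf_R (g a b) 0"
    using cdf_R_strict_around_centre[OF density(1) density_symmetric density(2), of a b "u b - u a"]
    by simp
  with assms show False unfolding cdf_twice_utility_diff[OF ab] cdf_0[OF ab] by simp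
qed

lemma choice_eq_if_utility_eq:
  assumes "(a, b) \<in> D" and "u a = u b"
  shows "p a b = p b a"
  using cdf_twice_utility_diff[OF assms(1)] cdf_0[OF assms(1)] assms(2) by simp

lemma utility_less_if_choice_less:
  assumes "(a, b) \<in> D" and "p b a < p a b"
  shows "u b < u a"
  using utility_le_if_choice_le[OF assms(1)] choice_eq_if_utility_eq[OF assms(1)] assms(2)
  by fastforce

lemma response_time_pos:
  assumes ab: "(a, b) \<in> D" and "p b a < p a b"
  shows "0 < r (2 * (u a - u b))"
proof -
  have "0 < p b a / p a b" using choice_prob[OF ab] choice_prob[OF D_sym[OF ab]] by simp
  then obtain t where t: "0 < t" "cdf_Rplus (f a b) t < p b a / p a b"
    using cdf_Rplus_arbitrarily_small[OF pos_density[OF ab]] by blast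
  \<comment> \<open>Such a short response time needs a utility difference rinv r t beyond 2 m;
    as r is positive on an initial segment, r (2 m) > 0.\<close>
  have "(1 - cdf_R (g a b) (rinv r t)) / p a b < p b a / p a b"
    using cdf_rinv[OF ab t(1)] t(2) unfolding cdf_0[OF ab] choice_prob(3)[OF ab] by simp
  then have "cdf_R (g a b) (2 * (u a - u b)) < cdf_R (g a b) (rinv r t)"
    using choice_prob[OF ab] unfolding cdf_twice_utility_diff[OF ab] by (simp add: divide_less_cancel)
  then have "2 * (u a - u b) < rinv r t"
    using cdf_R_mono[OF density(1)[OF D_Cpairs[OF ab]]] by (meson not_le)
  moreover have "0 < u a - u b" using utility_less_if_choice_less[OF assms] by simp
  ultimately show ?thesis
    using CF_pos_left[OF CF, of "2 * (u a - u b)" "rinv r t"] rinv_CF[OF CF t(1)] t(1) by simp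
qed

lemma cdf_Rplus_response_time:
  assumes ab: "(a, b) \<in> D" and "p b a < p a b"
  shows "cdf_Rplus (f a b) (r (2 * (u a - u b))) = p b a / p a b"
proof -
  have "rinv r (r (2 * (u a - u b))) = 2 * (u a - u b)"
    using rinv_CF_apply[OF CF] response_time_pos[OF assms] utility_less_if_choice_less[OF assms] by simp
  then show ?thesis
    using cdf_rinv[OF ab response_time_pos[OF assms]] cdf_twice_utility_diff[OF ab] cdf_0[OF ab]
      choice_prob(3)[OF ab] choice_prob(3)[OF D_sym[OF ab]] by simp
qed

lemma tval_eq:
  assumes ab: "(a, b) \<in> D" and "p b a < p a b"
  shows "tval D p f a b = Some (r (2 * (u a - u b)))"
  using cdf_Rplus_THE_eq[OF pos_density[OF ab] response_time_pos[OF assms]] assms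
  unfolding tval_def cdf_Rplus_response_time[OF assms, symmetric] by simp

lemma tval_eq_Some:
  assumes "tval D p f a b = Some t"
  shows "u b < u a" "0 < r (2 * (u a - u b))" "t = r (2 * (u a - u b))"
proof -
  have "(a, b) \<in> D" "p b a < p a b" using assms unfolding tval_def by (auto split: if_splits)
  then show "u b < u a" "0 < r (2 * (u a - u b))" "t = r (2 * (u a - u b))"
    using utility_less_if_choice_less response_time_pos tval_eq assms by auto
qed

lemma Rs_utility:
  assumes "(x, y) \<in> Rs D p"
  shows "u y \<le> u x \<and> (u x = u y \<longrightarrow> (y, x) \<in> Rs D p)"
proof (cases "x = y")
  case False
  then have xy: "(x, y) \<in> D" "p y x \<le> p x y" using assms unfolding Rs_def by auto
  then show ?thesis
    using utility_le_if_choice_le[OF xy] choice_eq_if_utility_eq[OF xy(1)] D_sym[OF xy(1)]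
    unfolding Rs_def by auto
qed (simp add: Rs_def)

lemma Rsrt_utility:
  assumes "(x, y) \<in> Rsrt D p f"
  shows "u y \<le> u x \<and> (u x = u y \<longrightarrow> (y, x) \<in> Rsrt D p f)"
proof -
  have yx: "(y, x) \<in> Cpairs - D" using assms D_sym unfolding Rsrt_def Cpairs_def by auto
  from assms obtain z where
    "(\<exists>s1 s2. tval D p f x z = Some s1 \<and> tval D p f y z = Some s2 \<and> s1 \<le> s2)
      \<or> (\<exists>s1 s2. tval D p f z x = Some s1 \<and> tval D p f z y = Some s2 \<and> s1 \<ge> s2)"
    unfolding Rsrt_def by blast
  then show ?thesis
  proof (elim disjE exE conjE)
    fix s1 s2 assume s: "tval D p f x z = Some s1" "tval D p f y z = Some s2" "s1 \<le> s2"
    have "u y \<le> u x"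
      using tval_eq_Some[OF s(1)] tval_eq_Some[OF s(2)] s(3) CF_le_iff[OF CF] by simp
    moreover have "(y, x) \<in> Rsrt D p f" if "u x = u y"
    proof -
      have "s1 = s2" using tval_eq_Some[OF s(1)] tval_eq_Some[OF s(2)] that by simp
      then show ?thesis using yx s unfolding Rsrt_def by blast
    qed
    ultimately show ?thesis by blast
  next
    fix s1 s2 assume s: "tval D p f z x = Some s1" "tval D p f z y = Some s2" "s2 \<le> s1"
    have "u y \<le> u x"
      using tval_eq_Some[OF s(1)] tval_eq_Some[OF s(2)] s(3) CF_le_iff[OF CF] by simp
    moreover have "(y, x) \<in> Rsrt D p f" if "u x = u y"
    proof -
      have "s1 = s2" using tval_eq_Some[OF s(1)] tval_eq_Some[OF s(2)] that by simp
      then show ?thesis using yx s unfolding Rsrt_def by blast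
    qed
    ultimately show ?thesis by blast
  qed
qed

end

lemma trancl_utility:
  fixes u :: "'a \<Rightarrow> 'b::linorder"
  assumes step: "\<And>x y. (x, y) \<in> R \<Longrightarrow> u y \<le> u x \<and> (u x = u y \<longrightarrow> (y, x) \<in> R)"
    and "(x, y) \<in> R\<^sup>+"
  shows "u y \<le> u x \<and> (u x = u y \<longrightarrow> (y, x) \<in> R\<^sup>+)"
  using \<open>(x, y) \<in> R\<^sup>+\<close>
proof (induction rule: trancl_induct)
  case (base y)
  then show ?case using step by blast
next
  case (step y z)
  then have "u z \<le> u y" "u y \<le> u x" using assms(1) by blast+
  moreover have "(z, x) \<in> R\<^sup>+" if "u x = u z"
  proof -
    have "(z, y) \<in> R" "(y, x) \<in> R\<^sup>+"
      using step assms(1)[OF step(2)] that \<open>u z \<le> u y\<close> \<open>u y \<le> u x\<close> by auto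
    then show ?thesis by (rule trancl_into_trancl2)
  qed
  ultimately show ?case by auto
qed

theorem corollary4:
  fixes D :: "('a::finite \<times> 'a) set"
    and p :: "'a \<Rightarrow> 'a \<Rightarrow> real"
    and f :: "'a \<Rightarrow> 'a \<Rightarrow> real \<Rightarrow> real"
    and x y :: 'a
  assumes "domain_ok D"
    and "is_SCF_RT D p f"
    and "\<exists>u g r. sym_rationalizes D p f u g r"
  shows "((x, y) \<in> TC (Rs D p \<union> Rsrt D p f) \<longrightarrow>
            (\<forall>u g r. sym_rationalizes D p f u g r \<longrightarrow> u x \<ge> u y))
       \<and> ((x, y) \<in> TP (Rs D p \<union> Rsrt D p f) \<longrightarrow>
            (\<forall>u g r. sym_rationalizes D p f u g r \<longrightarrow> u x > u y))"
proof -
  have chain: "u y \<le> u x \<and> (u x = u y \<longrightarrow> (y, x) \<in> TC (Rs D p \<union> Rsrt D p f))"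
    if "sym_rationalizes D p f u g r" "(x, y) \<in> TC (Rs D p \<union> Rsrt D p f)" for u g r
  proof -
    interpret sym_rationalization D p f u g r
      using assms(1,2) that(1) by unfold_locales
    have "u y' \<le> u x' \<and> (u x' = u y' \<longrightarrow> (y', x') \<in> Rs D p \<union> Rsrt D p f)"
      if "(x', y') \<in> Rs D p \<union> Rsrt D p f" for x' y'
      using that Rs_utility Rsrt_utility by blast
    from trancl_utility[OF this] show ?thesis using that(2) unfolding TC_def by blast
  qed
  show ?thesis
  proof (intro conjI impI allI)
    fix u g r
    assume "(x, y) \<in> TC (Rs D p \<union> Rsrt D p f)" "sym_rationalizes D p f u g r"
    then show "u y \<le> u x" using chain by blast
  next
    fix u g r
    assume "(x, y) \<in> TP (Rs D p \<union> Rsrt D p f)" "sym_rationalizes D p f u g r"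
    then show "u y < u x" using chain[of u g r] unfolding TP_def by fastforce
  qed
qed

end
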